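(* There is a constant $C_4>0$, depending only on $f,h,\tau$, such that for every $\Phi\in\mathcal C$, every $k\in\mathbb Z^+$ and every $n\ge1$, \[ |L_k^n(\Phi)|_\beta\le\left(|\Phi|_\beta\,\eta^{\beta n}+C_4|\Phi|_\infty\right)|L_k^n(\mathbf 1)|_\infty . \] (Pointwise: $|L_k^n\Phi(x)-L_k^n\Phi(y)|\le(|\Phi|_\beta\eta^{\beta n}+C_4|\Phi|_\infty)L_k^n\mathbf 1(x)\,d(x,y)^\beta$.)
   Context: Let $I=[0,1)$ carry a metric $d_I$, fix $\theta\in(0,1)$, and let $\Omega=I^{\mathbb Z}$ with metric $d(x,y)=\sup_{k\in\mathbb Z}\theta^{|k|}d_I(x_k,y_k)$. Let $\tau:I\to I$ have full branches, so that $b=\#\tau^{-1}(t)$ is constant; let $p_\tau$ be a fixed point of $\tau$. Assume there is $\eta\in(0,1)$ such that every inverse branch $\zeta$ of $\tau$ satisfies $d_I(\zeta(s),\zeta(t))\le\eta\,d_I(s,t)$. Let $(\bar\tau x)_i=\tau(x_i)$. Let $\pi_k:\Omega\to\Omega$ keep the coordinates $|i|\le k$ and set the others to $p_\tau$; $\Phi_k=\Phi\circ\pi_k$. Fix $\beta\in(0,1]$; $|\Phi|_\infty=\sup|\Phi|$, $|\Phi|_\beta=\sup_{k\in\mathbb N}\sup_{x\neq y}|\Phi_k(x)-\Phi_k(y)|/d(x,y)^\beta$, $\|\Phi\|=|\Phi|_\infty+|\Phi|_\beta$, $\mathcal C=\{\Phi\in C(\Omega):\|\Phi\|<\infty\}$.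 An inverse branch of order $k$ is a choice $\zeta=(\zeta_j)_{|j|\le k}$ of inverse branches of $\tau$, with $(\zeta_x)_j=\zeta_j(x_j)$ for $|j|\le k$, $(\zeta_x)_j=x_j$ otherwise; $b_k=b^{2k+1}$. For real $f\in\mathcal C$, $P_k\Phi(x)=b_k^{-1}\sum_{|\zeta|=k}e^{f(\pi_k\zeta_x)}\Phi(\pi_k\zeta_x)$ and $P\Phi=\lim_kP_k\Phi$ pointwise. Fix a Borel probability measure $\nu_0$ with $P^*\nu_0=\lambda\nu_0$, $\lambda=\int P\mathbf 1\,d\nu_0$, and let $h\in\mathcal C$ be the unique strictly positive function with $Ph=\lambda h$, $\nu_0(h)=1$, $h(x)\le \exp\!\big(|f|_\beta\frac{\eta^\beta}{1-\eta^\beta}d(x,y)^\beta\big)h(y)$ for all $x,y$. Put $g=f-\log\lambda-\log h\circ\bar\tau+\log h$ and $L_k\Phi(x)=b_k^{-1}\sum_{|\zeta|=k}e^{g(\pi_k\zeta_x)}\Phi(\pi_k\zeta_x)$; $L_k^n$ is its $n$-th iterate. *)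

theory Defs
  imports "HOL-Analysis.Analysis" "HOL-Probability.Probability"
begin

definition Iset :: "real set" where
  "Iset = {0..<1}"

definition Omega :: "(int \<Rightarrow> real) set" where
  "Omega = {x. \<forall>i. x i \<in> Iset}"

definition dOm :: "(real \<Rightarrow> real \<Rightarrow> real) \<Rightarrow> real \<Rightarrow> (int \<Rightarrow> real) \<Rightarrow> (int \<Rightarrow> real) \<Rightarrow> real" where
  "dOm dI \<theta> x y = (SUP k\<in>(UNIV::int set). \<theta> ^ nat \<bar>k\<bar> * dI (x k) (y k))"

definition trunc :: "real \<Rightarrow> nat \<Rightarrow> (int \<Rightarrow> real) \<Rightarrow> (int \<Rightarrow> real)" where
  "trunc p k x = (\<lambda>i. if \<bar>i\<bar> \<le> int k then x i else p)"

definition sup_norm :: "((int \<Rightarrow> real) \<Rightarrow> 'a::real_normed_vector) \<Rightarrow> real" where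
  "sup_norm \<Phi> = (SUP x\<in>Omega. norm (\<Phi> x))"

definition holder_quots :: "(real \<Rightarrow> real \<Rightarrow> real) \<Rightarrow> real \<Rightarrow> real \<Rightarrow> real \<Rightarrow>
    ((int \<Rightarrow> real) \<Rightarrow> 'a::real_normed_vector) \<Rightarrow> real set" where
  "holder_quots dI \<theta> p \<beta> \<Phi> =
     {norm (\<Phi> (trunc p k x) - \<Phi> (trunc p k y)) / (dOm dI \<theta> x y) powr \<beta> | k x y.
        x \<in> Omega \<and> y \<in> Omega \<and> x \<noteq> y}"

definition holder_semi :: "(real \<Rightarrow> real \<Rightarrow> real) \<Rightarrow> real \<Rightarrow> real \<Rightarrow> real \<Rightarrow>
    ((int \<Rightarrow> real) \<Rightarrow> 'a::real_normed_vector) \<Rightarrow> real" where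
  "holder_semi dI \<theta> p \<beta> \<Phi> = Sup (holder_quots dI \<theta> p \<beta> \<Phi>)"

definition cont_Om :: "(real \<Rightarrow> real \<Rightarrow> real) \<Rightarrow> real \<Rightarrow> ((int \<Rightarrow> real) \<Rightarrow> 'a::real_normed_vector) \<Rightarrow> bool" where
  "cont_Om dI \<theta> \<Phi> \<longleftrightarrow>
     (\<forall>x\<in>Omega. \<forall>e>0. \<exists>\<delta>>0. \<forall>y\<in>Omega. dOm dI \<theta> x y < \<delta> \<longrightarrow> norm (\<Phi> y - \<Phi> x) < e)"

definition classC :: "(real \<Rightarrow> real \<Rightarrow> real) \<Rightarrow> real \<Rightarrow> real \<Rightarrow> real \<Rightarrow>
    ((int \<Rightarrow> real) \<Rightarrow> 'a::real_normed_vector) \<Rightarrow> bool" where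
  "classC dI \<theta> p \<beta> \<Phi> \<longleftrightarrow> cont_Om dI \<theta> \<Phi> \<and> bdd_above ((\<lambda>x. norm (\<Phi> x)) ` Omega)
      \<and> bdd_above (holder_quots dI \<theta> p \<beta> \<Phi>)"

definition open_Om :: "(real \<Rightarrow> real \<Rightarrow> real) \<Rightarrow> real \<Rightarrow> (int \<Rightarrow> real) set \<Rightarrow> bool" where
  "open_Om dI \<theta> U \<longleftrightarrow> U \<subseteq> Omega \<and>
     (\<forall>x\<in>U. \<exists>e>0. \<forall>y\<in>Omega. dOm dI \<theta> x y < e \<longrightarrow> y \<in> U)"

text \<open>inverse branches of order k: a choice c j < b of branch index for each |j| <= k
  (branch j of tau is zeta j, for j < b)\<close>
definition branches :: "nat \<Rightarrow> nat \<Rightarrow> (int \<Rightarrow> nat) set" where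
  "branches b k = Pi\<^sub>E {- int k..int k} (\<lambda>_. {..<b})"

definition branch_pt :: "(nat \<Rightarrow> real \<Rightarrow> real) \<Rightarrow> real \<Rightarrow> nat \<Rightarrow> (int \<Rightarrow> nat) \<Rightarrow> (int \<Rightarrow> real) \<Rightarrow> (int \<Rightarrow> real)" where
  "branch_pt \<zeta> p k c x = (\<lambda>j. if \<bar>j\<bar> \<le> int k then \<zeta> (c j) (x j) else p)"

text \<open>The operator b_k^{-1} sum_{|zeta|=k} e^{G(pi_k zeta_x)} Phi(pi_k zeta_x);
  with G = f this is P_k, with G = g it is L_k.\<close>
definition Lop :: "nat \<Rightarrow> (nat \<Rightarrow> real \<Rightarrow> real) \<Rightarrow> real \<Rightarrow> ((int \<Rightarrow> real) \<Rightarrow> real) \<Rightarrow> nat \<Rightarrow>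
    ((int \<Rightarrow> real) \<Rightarrow> 'a::real_normed_vector) \<Rightarrow> (int \<Rightarrow> real) \<Rightarrow> 'a" where
  "Lop b \<zeta> p G k \<Phi> x = (1 / real b ^ (2 * k + 1)) *\<^sub>R
     (\<Sum>c\<in>branches b k. exp (G (branch_pt \<zeta> p k c x)) *\<^sub>R \<Phi> (branch_pt \<zeta> p k c x))"

definition tau_bar :: "(real \<Rightarrow> real) \<Rightarrow> (int \<Rightarrow> real) \<Rightarrow> (int \<Rightarrow> real)" where
  "tau_bar \<tau> x = (\<lambda>i. \<tau> (x i))"

end

theory Submission
  imports Defs
begin

(* Write l_n = L_k^n 1 and psi_n = L_k^n Phi.  The proof is an induction on n of
     |psi_n u - psi_n v| <= (|Phi|_beta eta^(beta n) + C4 |Phi|_inf) l_n u d(u,v)^beta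
   for k-truncated points u, v; every inverse-branch point pi_k zeta_x is k-truncated,
   so from n = 1 on the estimate holds for all x, y. *)

lemma abs_exp_minus_one_le: "\<bar>exp t - 1\<bar> \<le> \<bar>t\<bar> * exp \<bar>t\<bar>" for t :: real
proof (cases "t \<ge> 0")
  case True
  have "1 - t \<le> exp (-t)" using exp_ge_add_one_self[of "-t"] by simp
  hence "(1 - t) * exp t \<le> exp (-t) * exp t" by (rule mult_right_mono) simp
  also have "\<dots> = 1" by (simp flip: exp_add)
  finally show ?thesis using True by (simp add: algebra_simps)
next
  case False
  have "\<bar>exp t - 1\<bar> = 1 - exp t" using False by simp
  also have "\<dots> \<le> \<bar>t\<bar>" using exp_ge_add_one_self[of t] False by linarith
  also have "\<dots> \<le> \<bar>t\<bar> * exp \<bar>t\<bar>" by (simp add: mult_le_cancel_left1)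
  finally show ?thesis .
qed

lemma abs_exp_diff_le: "\<bar>exp a - exp a'\<bar> \<le> exp a * (\<bar>a' - a\<bar> * exp \<bar>a' - a\<bar>)" for a a' :: real
proof -
  have "\<bar>exp a - exp a'\<bar> = exp a * \<bar>exp (a' - a) - 1\<bar>"
    by (simp add: exp_diff field_simps abs_mult flip: abs_minus_commute)
  also have "\<dots> \<le> exp a * (\<bar>a' - a\<bar> * exp \<bar>a' - a\<bar>)"
    using abs_exp_minus_one_le[of "a' - a"] by (simp add: mult_left_mono)
  finally show ?thesis .
qed

lemma norm_scaleR_diff_le:
  fixes a c :: "'a::real_normed_vector" and e1 e2 :: real
  assumes "0 \<le> e1"
  shows "norm (e1 *\<^sub>R a - e2 *\<^sub>R c) \<le> e1 * norm (a - c) + \<bar>e1 - e2\<bar> * norm c"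
proof -
  have "e1 *\<^sub>R a - e2 *\<^sub>R c = e1 *\<^sub>R (a - c) + (e1 - e2) *\<^sub>R c" by (simp add: algebra_simps)
  thus ?thesis using assms norm_triangle_ineq[of "e1 *\<^sub>R (a - c)" "(e1 - e2) *\<^sub>R c"] by simp
qed

text \<open>Branchwise principles for the operator Lop with an arbitrary potential G.
  They hold because Lop is a nonnegative combination of the branch values.\<close>

lemma Lop_real: "Lop b \<zeta> p G k \<phi> x = (1 / real b ^ (2 * k + 1)) *
    (\<Sum>c\<in>branches b k. exp (G (branch_pt \<zeta> p k c x)) * \<phi> (branch_pt \<zeta> p k c x))"
  by (simp add: Lop_def)

lemma branches_finite: "finite (branches b k)"
  by (simp add: branches_def finite_PiE)

lemma branches_nonempty: "1 \<le> b \<Longrightarrow> branches b k \<noteq> {}"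
  by (auto simp: branches_def PiE_eq_empty_iff lessThan_empty_iff)

lemma Lop_pos:
  fixes \<phi> :: "(int \<Rightarrow> real) \<Rightarrow> real"
  assumes "1 \<le> b" "\<forall>c\<in>branches b k. 0 < \<phi> (branch_pt \<zeta> p k c x)"
  shows "0 < Lop b \<zeta> p G k \<phi> x"
proof -
  have "0 < (\<Sum>c\<in>branches b k. exp (G (branch_pt \<zeta> p k c x)) * \<phi> (branch_pt \<zeta> p k c x))"
    using assms by (intro sum_pos branches_finite branches_nonempty) auto
  thus ?thesis using assms(1) by (simp add: Lop_real)
qed

lemma Lop_compare:
  fixes \<phi> \<psi> :: "(int \<Rightarrow> real) \<Rightarrow> real"
  assumes "\<forall>c\<in>branches b k. exp (G (branch_pt \<zeta> p k c y)) * \<phi> (branch_pt \<zeta> p k c y)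
             \<le> K * (exp (G (branch_pt \<zeta> p k c x)) * \<psi> (branch_pt \<zeta> p k c x))"
  shows "Lop b \<zeta> p G k \<phi> y \<le> K * Lop b \<zeta> p G k \<psi> x"
proof -
  let ?s = "1 / real b ^ (2 * k + 1)"
  have "(\<Sum>c\<in>branches b k. exp (G (branch_pt \<zeta> p k c y)) * \<phi> (branch_pt \<zeta> p k c y))
     \<le> K * (\<Sum>c\<in>branches b k. exp (G (branch_pt \<zeta> p k c x)) * \<psi> (branch_pt \<zeta> p k c x))"
    unfolding sum_distrib_left using assms by (intro sum_mono) auto
  hence "Lop b \<zeta> p G k \<phi> y \<le> ?s * (K * (\<Sum>c\<in>branches b k. exp (G (branch_pt \<zeta> p k c x)) * \<psi> (branch_pt \<zeta> p k c x)))"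
    unfolding Lop_real by (rule mult_left_mono) simp
  thus ?thesis unfolding Lop_real by (simp only: mult.left_commute)
qed

lemma Lop_norm_le: "norm (Lop b \<zeta> p G k \<Psi> x) \<le> Lop b \<zeta> p G k (\<lambda>u. norm (\<Psi> u)) x"
proof -
  have "norm (\<Sum>c\<in>branches b k. exp (G (branch_pt \<zeta> p k c x)) *\<^sub>R \<Psi> (branch_pt \<zeta> p k c x))
      \<le> (\<Sum>c\<in>branches b k. norm (exp (G (branch_pt \<zeta> p k c x)) *\<^sub>R \<Psi> (branch_pt \<zeta> p k c x)))"
    by (rule norm_sum)
  thus ?thesis by (simp add: Lop_def divide_right_mono)
qed

lemma Lop_diff_le:
  fixes \<Psi> :: "(int \<Rightarrow> real) \<Rightarrow> 'a::real_normed_vector"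
  assumes "\<forall>c\<in>branches b k.
      norm (exp (G (branch_pt \<zeta> p k c x)) *\<^sub>R \<Psi> (branch_pt \<zeta> p k c x)
          - exp (G (branch_pt \<zeta> p k c y)) *\<^sub>R \<Psi> (branch_pt \<zeta> p k c y))
        \<le> K * (exp (G (branch_pt \<zeta> p k c x)) * \<phi> (branch_pt \<zeta> p k c x))"
  shows "norm (Lop b \<zeta> p G k \<Psi> x - Lop b \<zeta> p G k \<Psi> y) \<le> K * Lop b \<zeta> p G k \<phi> x"
proof -
  let ?s = "1 / real b ^ (2 * k + 1)"
  let ?t = "\<lambda>c z. exp (G (branch_pt \<zeta> p k c z)) *\<^sub>R \<Psi> (branch_pt \<zeta> p k c z)"
  have "norm (Lop b \<zeta> p G k \<Psi> x - Lop b \<zeta> p G k \<Psi> y) = ?s * norm (\<Sum>c\<in>branches b k. ?t c x - ?t c y)"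
    by (simp add: Lop_def sum_subtractf flip: scaleR_diff_right)
  also have "\<dots> \<le> ?s * (\<Sum>c\<in>branches b k. norm (?t c x - ?t c y))"
    by (rule mult_left_mono[OF norm_sum]) simp
  also have "\<dots> \<le> ?s * (\<Sum>c\<in>branches b k. K * (exp (G (branch_pt \<zeta> p k c x)) * \<phi> (branch_pt \<zeta> p k c x)))"
    using assms by (intro mult_left_mono sum_mono) auto
  also have "\<dots> = K * Lop b \<zeta> p G k \<phi> x"
    by (simp add: Lop_real sum_distrib_left mult.left_commute)
  finally show ?thesis .
qed

locale sequence_metric =
  fixes dI :: "real \<Rightarrow> real \<Rightarrow> real" and \<theta> B \<beta> p :: real
  assumes dI_nonneg: "\<forall>s\<in>Iset. \<forall>t\<in>Iset. 0 \<le> dI s t"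
    and dI_zero: "\<forall>s\<in>Iset. \<forall>t\<in>Iset. dI s t = 0 \<longleftrightarrow> s = t"
    and dI_sym: "\<forall>s\<in>Iset. \<forall>t\<in>Iset. dI s t = dI t s"
    and dI_bdd: "\<forall>s\<in>Iset. \<forall>t\<in>Iset. dI s t \<le> B"
    and \<theta>: "0 < \<theta>" "\<theta> < 1"
    and \<beta>: "0 < \<beta>"
    and p_in: "p \<in> Iset"
begin

abbreviation d where "d \<equiv> dOm dI \<theta>"
abbreviation holder where "holder \<equiv> holder_semi dI \<theta> p \<beta>"

lemma Omega_iff: "x \<in> Omega \<longleftrightarrow> (\<forall>i. x i \<in> Iset)"
  by (simp add: Omega_def)

lemma weighted_term_le_B:
  assumes "x \<in> Omega" "y \<in> Omega"
  shows "\<theta> ^ nat \<bar>j\<bar> * dI (x j) (y j) \<le> B"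
proof -
  have xy: "x j \<in> Iset" "y j \<in> Iset" using assms by (auto simp: Omega_iff)
  have "\<theta> ^ nat \<bar>j\<bar> * dI (x j) (y j) \<le> dI (x j) (y j)"
    using xy dI_nonneg \<theta> by (simp add: mult_left_le_one_le power_le_one)
  also have "\<dots> \<le> B" using xy dI_bdd by auto
  finally show ?thesis .
qed

lemma d_upper:
  assumes "x \<in> Omega" "y \<in> Omega"
  shows "\<theta> ^ nat \<bar>j\<bar> * dI (x j) (y j) \<le> d x y"
  unfolding dOm_def by (rule cSUP_upper[OF _ bdd_aboveI2[OF weighted_term_le_B[OF assms]]]) simp

lemma d_le: "(\<And>j. \<theta> ^ nat \<bar>j\<bar> * dI (x j) (y j) \<le> c) \<Longrightarrow> d x y \<le> c"
  unfolding dOm_def by (rule cSUP_least) auto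

lemma d_nonneg:
  assumes "x \<in> Omega" "y \<in> Omega"
  shows "0 \<le> d x y"
proof -
  have "0 \<le> dI (x 0) (y 0)" using assms dI_nonneg by (simp add: Omega_iff)
  thus ?thesis using d_upper[OF assms, of 0] by simp
qed

lemma d_le_B: "x \<in> Omega \<Longrightarrow> y \<in> Omega \<Longrightarrow> d x y \<le> B"
  by (rule d_le) (rule weighted_term_le_B)

lemma d_sym: "x \<in> Omega \<Longrightarrow> y \<in> Omega \<Longrightarrow> d x y = d y x"
  using dI_sym by (simp add: dOm_def Omega_iff)

lemma d_pos:
  assumes "x \<in> Omega" "y \<in> Omega" "x \<noteq> y"
  shows "0 < d x y"
proof -
  obtain j where j: "x j \<noteq> y j" using assms(3) by auto
  have "0 < dI (x j) (y j)" using assms j dI_nonneg dI_zero by (metis Omega_iff order_le_less)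
  hence "0 < \<theta> ^ nat \<bar>j\<bar> * dI (x j) (y j)" using \<theta> by simp
  also have "\<dots> \<le> d x y" by (rule d_upper[OF assms(1,2)])
  finally show ?thesis .
qed

lemma d_self:
  assumes "x \<in> Omega"
  shows "d x x = 0"
proof -
  have "dI (x j) (x j) = 0" for j using assms dI_zero unfolding Omega_iff by blast
  hence "d x x \<le> 0" by (intro d_le) simp
  thus ?thesis using d_nonneg[OF assms assms] by simp
qed

text \<open>B^beta bounds every d(x,y)^beta; this makes all exponential distortions uniform.\<close>
lemma dpow_le_B: "x \<in> Omega \<Longrightarrow> y \<in> Omega \<Longrightarrow> d x y powr \<beta> \<le> B powr \<beta>"
  using d_nonneg d_le_B \<beta> by (simp add: powr_mono2)

lemma trunc_Omega: "x \<in> Omega \<Longrightarrow> trunc p k x \<in> Omega"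
  using p_in by (simp add: Omega_iff trunc_def)

lemma d_trunc:
  assumes "x \<in> Omega" "y \<in> Omega"
  shows "d (trunc p k x) (trunc p k y) \<le> d x y"
proof (rule d_le)
  fix j
  have "dI p p = 0" using dI_zero p_in by simp
  thus "\<theta> ^ nat \<bar>j\<bar> * dI (trunc p k x j) (trunc p k y j) \<le> d x y"
    using d_upper[OF assms, of j] d_nonneg[OF assms] by (simp add: trunc_def)
qed

lemma dpow_trunc: "x \<in> Omega \<Longrightarrow> y \<in> Omega \<Longrightarrow>
    d (trunc p k x) (trunc p k y) powr \<beta> \<le> d x y powr \<beta>"
  using d_trunc d_nonneg trunc_Omega \<beta> by (simp add: powr_mono2)

lemma two_points: "(\<lambda>_. 0) \<in> Omega" "(\<lambda>_. 1/2) \<in> Omega" "(\<lambda>_::int. 0::real) \<noteq> (\<lambda>_. 1/2)"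
  by (auto simp: Omega_iff Iset_def fun_eq_iff)

lemma holder_quots_nonempty: "holder_quots dI \<theta> p \<beta> \<Phi> \<noteq> {}"
  unfolding holder_quots_def using two_points by blast

lemma holder_nonneg:
  assumes "bdd_above (holder_quots dI \<theta> p \<beta> \<Phi>)"
  shows "0 \<le> holder \<Phi>"
proof -
  obtain q where "q \<in> holder_quots dI \<theta> p \<beta> \<Phi>" using holder_quots_nonempty by blast
  moreover from this have "0 \<le> q" by (auto simp: holder_quots_def)
  ultimately show ?thesis unfolding holder_semi_def by (meson assms cSup_upper2)
qed

lemma holder_le:
  assumes "bdd_above (holder_quots dI \<theta> p \<beta> \<Phi>)" "u \<in> Omega" "v \<in> Omega"
  shows "norm (\<Phi> (trunc p k u) - \<Phi> (trunc p k v)) \<le> holder \<Phi> * d u v powr \<beta>"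
proof (cases "u = v")
  case True thus ?thesis using d_self[OF assms(3)] by simp
next
  case False
  let ?q = "norm (\<Phi> (trunc p k u) - \<Phi> (trunc p k v)) / d u v powr \<beta>"
  have "?q \<in> holder_quots dI \<theta> p \<beta> \<Phi>"
    unfolding holder_quots_def using assms False by blast
  hence "?q \<le> holder \<Phi>" unfolding holder_semi_def using assms(1) by (simp add: cSup_upper)
  thus ?thesis using d_pos[OF assms(2,3) False] by (simp add: divide_le_eq)
qed

lemma sup_norm_upper:
  "bdd_above ((\<lambda>x. norm (\<Phi> x)) ` Omega) \<Longrightarrow> x \<in> Omega \<Longrightarrow> norm (\<Phi> x) \<le> sup_norm \<Phi>"
  unfolding sup_norm_def by (rule cSUP_upper)

lemma sup_norm_nonneg: "bdd_above ((\<lambda>x. norm (\<Phi> x)) ` Omega) \<Longrightarrow> 0 \<le> sup_norm \<Phi>"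
  using sup_norm_upper[OF _ two_points(1)] norm_ge_zero order_trans by blast

end

locale branch_system = sequence_metric +
  fixes \<eta> :: real and \<tau> :: "real \<Rightarrow> real" and b :: nat and \<zeta> :: "nat \<Rightarrow> real \<Rightarrow> real"
  assumes \<eta>: "0 < \<eta>" "\<eta> < 1"
    and b_pos: "1 \<le> b"
    and zeta_maps: "\<forall>j<b. \<forall>t\<in>Iset. \<zeta> j t \<in> Iset \<and> \<tau> (\<zeta> j t) = t"
    and contr: "\<forall>j<b. \<forall>s\<in>Iset. \<forall>t\<in>Iset. dI (\<zeta> j s) (\<zeta> j t) \<le> \<eta> * dI s t"
    and p_fixed: "\<tau> p = p"
begin

lemma eta_powr: "0 < \<eta> powr \<beta>" "\<eta> powr \<beta> < 1"
  using \<eta> \<beta> powr_less_mono2[of \<beta> \<eta> 1] by auto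

lemma branches_lt: "c \<in> branches b k \<Longrightarrow> \<bar>j\<bar> \<le> int k \<Longrightarrow> c j < b"
  by (auto simp: branches_def PiE_def Pi_def abs_le_iff)

lemma branch_Omega: "x \<in> Omega \<Longrightarrow> c \<in> branches b k \<Longrightarrow> branch_pt \<zeta> p k c x \<in> Omega"
  using zeta_maps p_in branches_lt by (auto simp: Omega_iff branch_pt_def)

lemma trunc_branch: "trunc p k (branch_pt \<zeta> p k c x) = branch_pt \<zeta> p k c x"
  by (auto simp: trunc_def branch_pt_def)

lemma tau_branch:
  "x \<in> Omega \<Longrightarrow> c \<in> branches b k \<Longrightarrow> tau_bar \<tau> (branch_pt \<zeta> p k c x) = trunc p k x"
  using zeta_maps p_fixed branches_lt by (auto simp: Omega_iff branch_pt_def tau_bar_def trunc_def)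

lemma d_branch:
  assumes "x \<in> Omega" "y \<in> Omega" "c \<in> branches b k"
  shows "d (branch_pt \<zeta> p k c x) (branch_pt \<zeta> p k c y) \<le> \<eta> * d x y"
proof (rule d_le)
  fix j
  show "\<theta> ^ nat \<bar>j\<bar> * dI (branch_pt \<zeta> p k c x j) (branch_pt \<zeta> p k c y j) \<le> \<eta> * d x y"
  proof (cases "\<bar>j\<bar> \<le> int k")
    case True
    have "dI (\<zeta> (c j) (x j)) (\<zeta> (c j) (y j)) \<le> \<eta> * dI (x j) (y j)"
      using contr branches_lt[OF assms(3) True] assms(1,2) by (auto simp: Omega_iff)
    hence "\<theta> ^ nat \<bar>j\<bar> * dI (\<zeta> (c j) (x j)) (\<zeta> (c j) (y j)) \<le> \<eta> * (\<theta> ^ nat \<bar>j\<bar> * dI (x j) (y j))"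
      using \<theta> by (simp add: mult_left_mono mult.left_commute)
    also have "\<dots> \<le> \<eta> * d x y" using d_upper[OF assms(1,2)] \<eta> by (simp add: mult_left_mono)
    finally show ?thesis using True by (simp add: branch_pt_def)
  next
    case False
    have "dI p p = 0" using dI_zero p_in by simp
    thus ?thesis using False d_nonneg[OF assms(1,2)] \<eta> by (simp add: branch_pt_def)
  qed
qed

lemma dpow_branch:
  assumes "x \<in> Omega" "y \<in> Omega" "c \<in> branches b k"
  shows "d (branch_pt \<zeta> p k c x) (branch_pt \<zeta> p k c y) powr \<beta> \<le> \<eta> powr \<beta> * d x y powr \<beta>"
proof -
  have "d (branch_pt \<zeta> p k c x) (branch_pt \<zeta> p k c y) powr \<beta> \<le> (\<eta> * d x y) powr \<beta>"
    using d_branch[OF assms] d_nonneg branch_Omega assms \<beta> by (simp add: powr_mono2)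
  thus ?thesis using \<eta> d_nonneg[OF assms(1,2)] by (simp add: powr_mult)
qed

lemma dpow_branch_le:
  assumes "x \<in> Omega" "y \<in> Omega" "c \<in> branches b k"
  shows "d (branch_pt \<zeta> p k c x) (branch_pt \<zeta> p k c y) powr \<beta> \<le> d x y powr \<beta>"
proof -
  have "\<eta> powr \<beta> * d x y powr \<beta> \<le> d x y powr \<beta>" using eta_powr by (simp add: mult_left_le_one_le)
  thus ?thesis using dpow_branch[OF assms] by linarith
qed

end

locale normalised_potential = branch_system +
  fixes f h g :: "(int \<Rightarrow> real) \<Rightarrow> real" and lam :: real
  assumes f_holder: "bdd_above (holder_quots dI \<theta> p \<beta> f)"
    and h_pos: "\<forall>x\<in>Omega. 0 < h x"
    and h_reg: "\<forall>x\<in>Omega. \<forall>y\<in>Omega.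
        h x \<le> exp (holder f * (\<eta> powr \<beta> / (1 - \<eta> powr \<beta>)) * d x y powr \<beta>) * h y"
    and g_def: "g = (\<lambda>x. f x - ln lam - ln (h (tau_bar \<tau> x)) + ln (h x))"
begin

abbreviation Ln where "Ln k n \<equiv> Lop b \<zeta> p g k ^^ n"

text \<open>Constants: H is the log-Hoelder constant of h, G that of g along inverse branches,
  D the Harnack constant for L^n 1 and E the distortion constant of one step.\<close>
definition "H = holder f * (\<eta> powr \<beta> / (1 - \<eta> powr \<beta>))"
definition "G = holder f + 2 * H"
definition "D = G / (1 - \<eta> powr \<beta>)"
definition "E = G * exp ((G + D) * B powr \<beta>)"
definition "C4 = E / (1 - \<eta> powr \<beta>) + 1"

lemma H_nonneg: "0 \<le> H"
  unfolding H_def using holder_nonneg[OF f_holder] eta_powr by simp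

lemma G_nonneg: "0 \<le> G"
  unfolding G_def using holder_nonneg[OF f_holder] H_nonneg by simp

lemma D_props: "0 \<le> D" "G + D * \<eta> powr \<beta> = D"
  using G_nonneg eta_powr by (auto simp: D_def field_simps)

text \<open>C4 is a fixed point bound for the recursion C \<mapsto> C eta^beta + E.\<close>
lemma C4_props: "0 < C4" "C4 * \<eta> powr \<beta> + E \<le> C4"
proof -
  have "0 \<le> E / (1 - \<eta> powr \<beta>)" using G_nonneg eta_powr by (simp add: E_def)
  thus "0 < C4" by (simp add: C4_def)
  have "C4 * (1 - \<eta> powr \<beta>) = E + (1 - \<eta> powr \<beta>)" using eta_powr by (simp add: C4_def field_simps)
  thus "C4 * \<eta> powr \<beta> + E \<le> C4" using eta_powr by (simp add: algebra_simps)
qed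

lemma ln_h_diff:
  assumes "x \<in> Omega" "y \<in> Omega"
  shows "\<bar>ln (h x) - ln (h y)\<bar> \<le> H * d x y powr \<beta>"
proof -
  have one_sided: "ln (h u) - ln (h v) \<le> H * d u v powr \<beta>" if "u \<in> Omega" "v \<in> Omega" for u v
  proof -
    have "h u \<le> exp (H * d u v powr \<beta>) * h v" using h_reg that unfolding H_def by auto
    moreover have "0 < h u" "0 < h v" using h_pos that by auto
    ultimately have "ln (h u) \<le> ln (exp (H * d u v powr \<beta>) * h v)" by simp
    thus ?thesis using \<open>0 < h v\<close> by (simp add: ln_mult)
  qed
  have "ln (h y) - ln (h x) \<le> H * d x y powr \<beta>"
    using one_sided[OF assms(2,1)] d_sym[OF assms] by simp
  moreover have "ln (h x) - ln (h y) \<le> H * d x y powr \<beta>" by (rule one_sided[OF assms])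
  ultimately show ?thesis by (simp add: abs_le_iff)
qed

lemma g_branch_diff:
  assumes x: "x \<in> Omega" and y: "y \<in> Omega" and c: "c \<in> branches b k"
  shows "\<bar>g (branch_pt \<zeta> p k c x) - g (branch_pt \<zeta> p k c y)\<bar> \<le> G * d x y powr \<beta>"
proof -
  let ?u = "branch_pt \<zeta> p k c x" and ?v = "branch_pt \<zeta> p k c y"
  have uv: "?u \<in> Omega" "?v \<in> Omega" using branch_Omega x y c by auto
  have duv: "d ?u ?v powr \<beta> \<le> d x y powr \<beta>" by (rule dpow_branch_le[OF x y c])
  have "\<bar>f ?u - f ?v\<bar> = norm (f (trunc p k ?u) - f (trunc p k ?v))" by (simp add: trunc_branch)
  also have "\<dots> \<le> holder f * d ?u ?v powr \<beta>" by (rule holder_le[OF f_holder uv])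
  also have "\<dots> \<le> holder f * d x y powr \<beta>"
    using duv holder_nonneg[OF f_holder] by (simp add: mult_left_mono)
  finally have f_part: "\<bar>f ?u - f ?v\<bar> \<le> holder f * d x y powr \<beta>" .
  have "\<bar>ln (h (trunc p k x)) - ln (h (trunc p k y))\<bar> \<le> H * d x y powr \<beta>"
    using ln_h_diff[OF trunc_Omega[OF x] trunc_Omega[OF y], of k] dpow_trunc[OF x y, of k] H_nonneg
    by (meson mult_left_mono order_trans)
  hence h_tau_part: "\<bar>ln (h (tau_bar \<tau> ?u)) - ln (h (tau_bar \<tau> ?v))\<bar> \<le> H * d x y powr \<beta>"
    using tau_branch x y c by simp
  have h_part: "\<bar>ln (h ?u) - ln (h ?v)\<bar> \<le> H * d x y powr \<beta>"
    using ln_h_diff[OF uv] duv H_nonneg by (meson mult_left_mono order_trans)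
  show ?thesis using f_part h_tau_part h_part unfolding g_def G_def by (simp add: algebra_simps)
qed

lemma L1_pos: "x \<in> Omega \<Longrightarrow> 0 < Ln k n (\<lambda>_. 1::real) x"
proof (induction n arbitrary: x)
  case (Suc n)
  thus ?case using Lop_pos[OF b_pos] branch_Omega by simp
qed simp

lemma L1_harnack:
  "x \<in> Omega \<Longrightarrow> y \<in> Omega \<Longrightarrow> Ln k n (\<lambda>_. 1::real) y \<le> exp (D * d x y powr \<beta>) * Ln k n (\<lambda>_. 1::real) x"
proof (induction n arbitrary: x y)
  case 0 thus ?case using D_props by simp
next
  case (Suc n)
  define l where "l = Ln k n (\<lambda>_. 1::real)"
  define dd where "dd = d x y powr \<beta>"
  have "exp (g (branch_pt \<zeta> p k c y)) * l (branch_pt \<zeta> p k c y)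
     \<le> exp (D * dd) * (exp (g (branch_pt \<zeta> p k c x)) * l (branch_pt \<zeta> p k c x))"
    if c: "c \<in> branches b k" for c
  proof -
    let ?u = "branch_pt \<zeta> p k c x" and ?v = "branch_pt \<zeta> p k c y"
    have uv: "?u \<in> Omega" "?v \<in> Omega" using branch_Omega Suc.prems c by auto
    have "exp (g ?v) \<le> exp (g ?u + G * dd)"
      using g_branch_diff[OF Suc.prems c] by (simp add: dd_def)
    moreover have "l ?v \<le> exp (D * (\<eta> powr \<beta> * dd)) * l ?u"
    proof -
      have "l ?v \<le> exp (D * d ?u ?v powr \<beta>) * l ?u" using Suc.IH[OF uv] by (simp add: l_def)
      also have "\<dots> \<le> exp (D * (\<eta> powr \<beta> * dd)) * l ?u"
        using dpow_branch[OF Suc.prems c] D_props L1_pos[OF uv(1)]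
        by (simp add: l_def dd_def mult_left_mono)
      finally show ?thesis .
    qed
    moreover have "0 \<le> l ?v" using less_imp_le[OF L1_pos[OF uv(2)]] by (simp add: l_def)
    ultimately have "exp (g ?v) * l ?v \<le> exp (g ?u + G * dd) * (exp (D * (\<eta> powr \<beta> * dd)) * l ?u)"
      by (intro mult_mono) auto
    also have "\<dots> = exp ((G + D * \<eta> powr \<beta>) * dd) * (exp (g ?u) * l ?u)"
      by (simp add: exp_add algebra_simps)
    finally show ?thesis using D_props by simp
  qed
  thus ?case by (simp add: Lop_compare l_def dd_def)
qed

lemma L1_bdd: "bdd_above ((\<lambda>x. norm (Ln k n (\<lambda>_. 1::real) x)) ` Omega)"
proof (rule bdd_aboveI2)
  fix y assume y: "y \<in> Omega"
  let ?x = "\<lambda>_. 0" and ?l = "Ln k n (\<lambda>_. 1::real)"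
  have "?l y \<le> exp (D * d ?x y powr \<beta>) * ?l ?x" by (rule L1_harnack[OF two_points(1) y])
  also have "\<dots> \<le> exp (D * B powr \<beta>) * ?l ?x"
    using dpow_le_B[OF two_points(1) y] D_props L1_pos[OF two_points(1)]
    by (simp add: mult_left_mono)
  finally show "norm (?l y) \<le> exp (D * B powr \<beta>) * ?l ?x" using L1_pos[OF y] by (simp add: abs_of_pos)
qed

lemma L1_le_sup_norm: "x \<in> Omega \<Longrightarrow> Ln k n (\<lambda>_. 1::real) x \<le> sup_norm (Ln k n (\<lambda>_. 1::real))"
  using sup_norm_upper[OF L1_bdd] L1_pos by (simp add: abs_of_pos)

lemma Ln_norm_le:
  assumes "bdd_above ((\<lambda>x. norm (\<Phi> x)) ` Omega)"
  shows "x \<in> Omega \<Longrightarrow> norm (Ln k n \<Phi> x) \<le> sup_norm \<Phi> * Ln k n (\<lambda>_. 1::real) x"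
proof (induction n arbitrary: x)
  case 0 thus ?case using sup_norm_upper[OF assms] by simp
next
  case (Suc n)
  have "norm (Ln k (Suc n) \<Phi> x) \<le> Lop b \<zeta> p g k (\<lambda>u. norm (Ln k n \<Phi> u)) x"
    by (simp add: Lop_norm_le)
  also have "\<dots> \<le> sup_norm \<Phi> * Ln k (Suc n) (\<lambda>_. 1::real) x"
    using Suc.IH branch_Omega Suc.prems
    by (simp add: Lop_compare mult_left_mono mult.left_commute)
  finally show ?case .
qed

text \<open>The one-branch estimate behind the induction step: the oscillation of psi between the
  branch points u, v contracts by eta^beta, and the change of the weight exp g costs E |psi|.\<close>
lemma branch_term_estimate:
  fixes \<psi> :: "(int \<Rightarrow> real) \<Rightarrow> 'a::real_normed_vector" and l :: "(int \<Rightarrow> real) \<Rightarrow> real"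
  assumes x: "x \<in> Omega" and y: "y \<in> Omega" and c: "c \<in> branches b k"
  defines "u \<equiv> branch_pt \<zeta> p k c x" and "v \<equiv> branch_pt \<zeta> p k c y"
  assumes osc: "norm (\<psi> u - \<psi> v) \<le> Q * l u * d u v powr \<beta>"
    and bound: "norm (\<psi> v) \<le> S * l v"
    and harnack: "l v \<le> exp (D * d u v powr \<beta>) * l u"
    and nonneg: "0 \<le> Q" "0 \<le> S" "0 \<le> l u"
  shows "norm (exp (g u) *\<^sub>R \<psi> u - exp (g v) *\<^sub>R \<psi> v)
     \<le> (Q * \<eta> powr \<beta> + E * S) * d x y powr \<beta> * (exp (g u) * l u)"
proof -
  define dd where "dd = d x y powr \<beta>"
  have uv: "u \<in> Omega" "v \<in> Omega" using branch_Omega x y c by (auto simp: u_def v_def)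
  have dd_le_B: "dd \<le> B powr \<beta>" using dpow_le_B[OF x y] by (simp add: dd_def)
  have osc': "norm (\<psi> u - \<psi> v) \<le> Q * l u * (\<eta> powr \<beta> * dd)"
    using osc dpow_branch[OF x y c] nonneg by (simp add: u_def v_def dd_def mult_left_mono order_trans)
  have gd: "\<bar>g v - g u\<bar> \<le> G * dd"
    using g_branch_diff[OF x y c] by (simp add: u_def v_def dd_def abs_minus_commute)
  have "\<bar>exp (g u) - exp (g v)\<bar> \<le> exp (g u) * (\<bar>g v - g u\<bar> * exp \<bar>g v - g u\<bar>)"
    by (rule abs_exp_diff_le)
  also have "\<dots> \<le> exp (g u) * (G * dd * exp (G * B powr \<beta>))"
    using gd dd_le_B G_nonneg by (intro mult_left_mono mult_mono) (auto intro: order_trans mult_left_mono)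
  finally have weight: "\<bar>exp (g u) - exp (g v)\<bar> \<le> exp (g u) * (G * dd * exp (G * B powr \<beta>))" .
  have "norm (\<psi> v) \<le> S * (exp (D * d u v powr \<beta>) * l u)"
    using bound harnack nonneg by (meson mult_left_mono order_trans)
  also have "\<dots> \<le> S * (exp (D * B powr \<beta>) * l u)"
    using dpow_le_B[OF uv] D_props nonneg by (intro mult_left_mono mult_right_mono) (auto intro: mult_left_mono)
  finally have psi_v: "norm (\<psi> v) \<le> S * (exp (D * B powr \<beta>) * l u)" .
  have "norm (exp (g u) *\<^sub>R \<psi> u - exp (g v) *\<^sub>R \<psi> v)
      \<le> exp (g u) * norm (\<psi> u - \<psi> v) + \<bar>exp (g u) - exp (g v)\<bar> * norm (\<psi> v)"
    by (rule norm_scaleR_diff_le) simp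
  also have "\<dots> \<le> exp (g u) * (Q * l u * (\<eta> powr \<beta> * dd))
      + exp (g u) * (G * dd * exp (G * B powr \<beta>)) * (S * (exp (D * B powr \<beta>) * l u))"
    using osc' weight psi_v by (intro add_mono mult_left_mono mult_mono) auto
  also have "\<dots> = (Q * \<eta> powr \<beta> + E * S) * dd * (exp (g u) * l u)"
    by (simp add: E_def exp_add algebra_simps)
  finally show ?thesis by (simp add: dd_def)
qed

text \<open>The induction step of the Lasota-Yorke inequality: if the estimate for L^n holds between
  k-truncated points, then the estimate for L^(n+1), with eta^beta gained on the Hoelder part,
  holds between arbitrary points, because all branch points are k-truncated.\<close>
lemma holder_step:
  assumes Phi_bdd: "bdd_above ((\<lambda>x. norm (\<Phi> x)) ` Omega)"
    and Phi_holder: "bdd_above (holder_quots dI \<theta> p \<beta> \<Phi>)"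
    and IH: "\<And>u v. u \<in> Omega \<Longrightarrow> v \<in> Omega \<Longrightarrow> trunc p k u = u \<Longrightarrow> trunc p k v = v \<Longrightarrow>
      norm (Ln k n \<Phi> u - Ln k n \<Phi> v)
        \<le> (holder \<Phi> * \<eta> powr (\<beta> * real n) + C4 * sup_norm \<Phi>) * Ln k n (\<lambda>_. 1::real) u * d u v powr \<beta>"
    and x: "x \<in> Omega" and y: "y \<in> Omega"
  shows "norm (Ln k (Suc n) \<Phi> x - Ln k (Suc n) \<Phi> y)
    \<le> (holder \<Phi> * \<eta> powr (\<beta> * real (Suc n)) + C4 * sup_norm \<Phi>) * Ln k (Suc n) (\<lambda>_. 1::real) x * d x y powr \<beta>"
proof -
  define Q where "Q = holder \<Phi> * \<eta> powr (\<beta> * real n) + C4 * sup_norm \<Phi>"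
  have S: "0 \<le> sup_norm \<Phi>" by (rule sup_norm_nonneg[OF Phi_bdd])
  have Q: "0 \<le> Q" using holder_nonneg[OF Phi_holder] S C4_props by (simp add: Q_def)
  have recursion: "Q * \<eta> powr \<beta> + E * sup_norm \<Phi>
      \<le> holder \<Phi> * \<eta> powr (\<beta> * real (Suc n)) + C4 * sup_norm \<Phi>"
    using mult_right_mono[OF C4_props(2) S]
    by (simp add: Q_def algebra_simps powr_add)
  let ?K = "(Q * \<eta> powr \<beta> + E * sup_norm \<Phi>) * d x y powr \<beta>"
  have "norm (exp (g (branch_pt \<zeta> p k c x)) *\<^sub>R Ln k n \<Phi> (branch_pt \<zeta> p k c x)
             - exp (g (branch_pt \<zeta> p k c y)) *\<^sub>R Ln k n \<Phi> (branch_pt \<zeta> p k c y))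
      \<le> ?K * (exp (g (branch_pt \<zeta> p k c x)) * Ln k n (\<lambda>_. 1::real) (branch_pt \<zeta> p k c x))"
    if c: "c \<in> branches b k" for c
  proof (rule branch_term_estimate[OF x y c])
    have bp: "branch_pt \<zeta> p k c x \<in> Omega" "branch_pt \<zeta> p k c y \<in> Omega"
      using branch_Omega x y c by auto
    show "norm (Ln k n \<Phi> (branch_pt \<zeta> p k c x) - Ln k n \<Phi> (branch_pt \<zeta> p k c y))
        \<le> Q * Ln k n (\<lambda>_. 1::real) (branch_pt \<zeta> p k c x)
            * d (branch_pt \<zeta> p k c x) (branch_pt \<zeta> p k c y) powr \<beta>"
      unfolding Q_def by (rule IH[OF bp trunc_branch trunc_branch])
    show "norm (Ln k n \<Phi> (branch_pt \<zeta> p k c y)) \<le> sup_norm \<Phi> * Ln k n (\<lambda>_. 1::real) (branch_pt \<zeta> p k c y)"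
      by (rule Ln_norm_le[OF Phi_bdd bp(2)])
    show "Ln k n (\<lambda>_. 1::real) (branch_pt \<zeta> p k c y)
        \<le> exp (D * d (branch_pt \<zeta> p k c x) (branch_pt \<zeta> p k c y) powr \<beta>)
            * Ln k n (\<lambda>_. 1::real) (branch_pt \<zeta> p k c x)"
      by (rule L1_harnack[OF bp])
    show "0 \<le> Ln k n (\<lambda>_. 1::real) (branch_pt \<zeta> p k c x)" by (rule less_imp_le[OF L1_pos[OF bp(1)]])
  qed (use Q S in auto)
  hence "norm (Ln k (Suc n) \<Phi> x - Ln k (Suc n) \<Phi> y) \<le> ?K * Ln k (Suc n) (\<lambda>_. 1::real) x"
    by (simp add: Lop_diff_le)
  also have "\<dots> \<le> (holder \<Phi> * \<eta> powr (\<beta> * real (Suc n)) + C4 * sup_norm \<Phi>)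
      * d x y powr \<beta> * Ln k (Suc n) (\<lambda>_. 1::real) x"
    using recursion less_imp_le[OF L1_pos[OF x, where k=k and n="Suc n"]] by (intro mult_right_mono) auto
  finally show ?thesis by (simp add: mult_ac)
qed

lemma holder_truncated:
  assumes Phi_bdd: "bdd_above ((\<lambda>x. norm (\<Phi> x)) ` Omega)"
    and Phi_holder: "bdd_above (holder_quots dI \<theta> p \<beta> \<Phi>)"
  shows "u \<in> Omega \<Longrightarrow> v \<in> Omega \<Longrightarrow> trunc p k u = u \<Longrightarrow> trunc p k v = v \<Longrightarrow>
      norm (Ln k n \<Phi> u - Ln k n \<Phi> v)
        \<le> (holder \<Phi> * \<eta> powr (\<beta> * real n) + C4 * sup_norm \<Phi>) * Ln k n (\<lambda>_. 1::real) u * d u v powr \<beta>"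
proof (induction n arbitrary: u v)
  case 0
  have "norm (\<Phi> u - \<Phi> v) \<le> holder \<Phi> * d u v powr \<beta>"
    using holder_le[OF Phi_holder 0(1,2), of k] 0(3,4) by simp
  also have "\<dots> \<le> (holder \<Phi> + C4 * sup_norm \<Phi>) * d u v powr \<beta>"
    using C4_props sup_norm_nonneg[OF Phi_bdd] by (simp add: mult_right_mono)
  finally show ?case using \<eta> by simp
next
  case (Suc n)
  show ?case by (rule holder_step[OF Phi_bdd Phi_holder Suc.IH Suc.prems(1,2)])
qed

lemma lasota_yorke_pointwise:
  assumes "bdd_above ((\<lambda>x. norm (\<Phi> x)) ` Omega)" "bdd_above (holder_quots dI \<theta> p \<beta> \<Phi>)"
    and "1 \<le> n" "x \<in> Omega" "y \<in> Omega"
  shows "norm (Ln k n \<Phi> x - Ln k n \<Phi> y)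
    \<le> (holder \<Phi> * \<eta> powr (\<beta> * real n) + C4 * sup_norm \<Phi>) * Ln k n (\<lambda>_. 1::real) x * d x y powr \<beta>"
proof -
  obtain m where m: "n = Suc m" using \<open>1 \<le> n\<close> by (cases n) auto
  show ?thesis unfolding m by (rule holder_step[OF assms(1,2) holder_truncated[OF assms(1,2)] assms(4,5)])
qed

lemma lasota_yorke_seminorm:
  assumes Phi_bdd: "bdd_above ((\<lambda>x. norm (\<Phi> x)) ` Omega)"
    and Phi_holder: "bdd_above (holder_quots dI \<theta> p \<beta> \<Phi>)"
    and n: "1 \<le> n"
  shows "holder (Ln k n \<Phi>)
    \<le> (holder \<Phi> * \<eta> powr (\<beta> * real n) + C4 * sup_norm \<Phi>) * sup_norm (Ln k n (\<lambda>_. 1::real))"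
proof -
  define Q where "Q = holder \<Phi> * \<eta> powr (\<beta> * real n) + C4 * sup_norm \<Phi>"
  define l where "l = Ln k n (\<lambda>_. 1::real)"
  have Q: "0 \<le> Q"
    unfolding Q_def using holder_nonneg[OF Phi_holder] sup_norm_nonneg[OF Phi_bdd] C4_props by simp
  have "q \<le> Q * sup_norm l" if q_in: "q \<in> holder_quots dI \<theta> p \<beta> (Ln k n \<Phi>)" for q
  proof -
    obtain m x y where q: "q = norm (Ln k n \<Phi> (trunc p m x) - Ln k n \<Phi> (trunc p m y)) / d x y powr \<beta>"
      and x: "x \<in> Omega" and y: "y \<in> Omega" and xy: "x \<noteq> y"
      using q_in unfolding holder_quots_def by blast
    have tx: "trunc p m x \<in> Omega" "trunc p m y \<in> Omega" using trunc_Omega x y by auto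
    have "norm (Ln k n \<Phi> (trunc p m x) - Ln k n \<Phi> (trunc p m y))
        \<le> Q * l (trunc p m x) * d (trunc p m x) (trunc p m y) powr \<beta>"
      unfolding Q_def l_def by (rule lasota_yorke_pointwise[OF Phi_bdd Phi_holder n tx])
    also have "\<dots> \<le> Q * sup_norm l * d x y powr \<beta>"
    proof -
      have l: "0 \<le> l (trunc p m x)" "l (trunc p m x) \<le> sup_norm l"
        using L1_pos[OF tx(1), where k=k and n=n] L1_le_sup_norm[OF tx(1), where k=k and n=n]
        by (simp_all add: l_def)
      thus ?thesis using dpow_trunc[OF x y, of m] Q by (intro mult_mono mult_left_mono) auto
    qed
    finally show ?thesis unfolding q using d_pos[OF x y xy] by (simp add: divide_le_eq)
  qed
  hence "holder (Ln k n \<Phi>) \<le> Q * sup_norm l"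
    unfolding holder_semi_def by (intro cSup_least holder_quots_nonempty)
  thus ?thesis by (simp add: Q_def l_def)
qed

end

theorem mainTheorem8:
  fixes dI :: "real \<Rightarrow> real \<Rightarrow> real" and \<theta> \<eta> \<beta> p lam :: real
    and \<tau> :: "real \<Rightarrow> real" and b :: nat and \<zeta> :: "nat \<Rightarrow> real \<Rightarrow> real"
    and f h :: "(int \<Rightarrow> real) \<Rightarrow> real" and M :: "(int \<Rightarrow> real) measure"
  assumes dI_nonneg: "\<forall>s\<in>Iset. \<forall>t\<in>Iset. 0 \<le> dI s t"
    and dI_zero: "\<forall>s\<in>Iset. \<forall>t\<in>Iset. dI s t = 0 \<longleftrightarrow> s = t"
    and dI_sym: "\<forall>s\<in>Iset. \<forall>t\<in>Iset. dI s t = dI t s"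
    and dI_tri: "\<forall>s\<in>Iset. \<forall>t\<in>Iset. \<forall>u\<in>Iset. dI s u \<le> dI s t + dI t u"
    and dI_bdd: "\<exists>B. \<forall>s\<in>Iset. \<forall>t\<in>Iset. dI s t \<le> B"
    and \<theta>: "0 < \<theta>" "\<theta> < 1"
    and \<beta>: "0 < \<beta>" "\<beta> \<le> 1"
    and \<eta>: "0 < \<eta>" "\<eta> < 1"
    and tau_maps: "\<tau> ` Iset \<subseteq> Iset"
    and b_pos: "1 \<le> b"
    and zeta_maps: "\<forall>j<b. \<forall>t\<in>Iset. \<zeta> j t \<in> Iset \<and> \<tau> (\<zeta> j t) = t"
    and preimage: "\<forall>t\<in>Iset. {s\<in>Iset. \<tau> s = t} = (\<lambda>j. \<zeta> j t) ` {..<b}"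
    and card_preimage: "\<forall>t\<in>Iset. card {s\<in>Iset. \<tau> s = t} = b"
    and full_branch: "\<forall>j<b. is_interval (\<zeta> j ` Iset)"
    and contr: "\<forall>j<b. \<forall>s\<in>Iset. \<forall>t\<in>Iset. dI (\<zeta> j s) (\<zeta> j t) \<le> \<eta> * dI s t"
    and fixpt: "p \<in> Iset" "\<tau> p = p"
    and f_C: "classC dI \<theta> p \<beta> f"
    and M_prob: "prob_space M"
    and M_space: "space M = Omega"
    and M_borel: "sets M = sigma_sets Omega {U. open_Om dI \<theta> U}"
    and M_eigen: "\<forall>\<Phi>::(int \<Rightarrow> real) \<Rightarrow> real. classC dI \<theta> p \<beta> \<Phi> \<longrightarrow>
        (\<integral>x. lim (\<lambda>k. Lop b \<zeta> p f k \<Phi> x) \<partial>M) = lam * (\<integral>x. \<Phi> x \<partial>M)"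
    and lam_def: "lam = (\<integral>x. lim (\<lambda>k. Lop b \<zeta> p f k (\<lambda>_. 1::real) x) \<partial>M)"
    and h_C: "classC dI \<theta> p \<beta> h"
    and h_pos: "\<forall>x\<in>Omega. 0 < h x"
    and h_eigen: "\<forall>x\<in>Omega. (\<lambda>k. Lop b \<zeta> p f k h x) \<longlonglongrightarrow> lam * h x"
    and h_norm: "(\<integral>x. h x \<partial>M) = 1"
    and h_reg: "\<forall>x\<in>Omega. \<forall>y\<in>Omega.
        h x \<le> exp (holder_semi dI \<theta> p \<beta> f * (\<eta> powr \<beta> / (1 - \<eta> powr \<beta>))
                   * dOm dI \<theta> x y powr \<beta>) * h y"
  defines "g \<equiv> (\<lambda>x. f x - ln lam - ln (h (tau_bar \<tau> x)) + ln (h x))"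
  shows "\<exists>C4>0. \<forall>\<Phi>::(int \<Rightarrow> real) \<Rightarrow> complex. classC dI \<theta> p \<beta> \<Phi> \<longrightarrow>
    (\<forall>k\<ge>1. \<forall>n\<ge>1.
      holder_semi dI \<theta> p \<beta> ((Lop b \<zeta> p g k ^^ n) \<Phi>)
        \<le> (holder_semi dI \<theta> p \<beta> \<Phi> * \<eta> powr (\<beta> * real n) + C4 * sup_norm \<Phi>)
           * sup_norm ((Lop b \<zeta> p g k ^^ n) (\<lambda>_. 1::real))
      \<and> (\<forall>x\<in>Omega. \<forall>y\<in>Omega.
          norm ((Lop b \<zeta> p g k ^^ n) \<Phi> x - (Lop b \<zeta> p g k ^^ n) \<Phi> y)
            \<le> (holder_semi dI \<theta> p \<beta> \<Phi> * \<eta> powr (\<beta> * real n) + C4 * sup_norm \<Phi>)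
               * (Lop b \<zeta> p g k ^^ n) (\<lambda>_. 1::real) x * dOm dI \<theta> x y powr \<beta>))"
proof -
  obtain B where B: "\<forall>s\<in>Iset. \<forall>t\<in>Iset. dI s t \<le> B" using dI_bdd by blast
  have f_holder: "bdd_above (holder_quots dI \<theta> p \<beta> f)" using f_C by (simp add: classC_def)
  interpret normalised_potential dI \<theta> B \<beta> p \<eta> \<tau> b \<zeta> f h g lam
    by unfold_locales (fact dI_nonneg dI_zero dI_sym B \<theta> \<beta> \<eta> b_pos zeta_maps contr
        fixpt f_holder h_pos h_reg | simp add: g_def)+
  show ?thesis
  proof (intro exI[of _ C4] conjI allI impI ballI C4_props(1))
    fix \<Phi> :: "(int \<Rightarrow> real) \<Rightarrow> complex" and k n :: nat and x y
    assume "classC dI \<theta> p \<beta> \<Phi>" and n: "1 \<le> n"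
    hence Phi_bdd: "bdd_above ((\<lambda>x. norm (\<Phi> x)) ` Omega)"
      and Phi_holder: "bdd_above (holder_quots dI \<theta> p \<beta> \<Phi>)"
      by (auto simp: classC_def)
    show "holder (Ln k n \<Phi>)
        \<le> (holder \<Phi> * \<eta> powr (\<beta> * real n) + C4 * sup_norm \<Phi>) * sup_norm (Ln k n (\<lambda>_. 1::real))"
      by (rule lasota_yorke_seminorm[OF Phi_bdd Phi_holder n])
    assume "x \<in> Omega" "y \<in> Omega"
    thus "norm (Ln k n \<Phi> x - Ln k n \<Phi> y)
        \<le> (holder \<Phi> * \<eta> powr (\<beta> * real n) + C4 * sup_norm \<Phi>) * Ln k n (\<lambda>_. 1::real) x * d x y powr \<beta>"
      by (rule lasota_yorke_pointwise[OF Phi_bdd Phi_holder n])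
  qed
qed

end
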